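(* Let $(\mathcal M^-,\mathcal M^+)$ and $(\mathcal N^-,\mathcal N^+)$ be symbolic matrix bisystems satisfying FPCC. If they are properly strong shift equivalent in 1-step, then they are strong shift equivalent in 1-step.
   Context: Formal sums/specifications: $\mathfrak S_\Sigma$ = finite formal sums over a finite alphabet; products of matrices over $C$ and $D$ are over $C\cdot D=\{cd\}$; a specification is a bijection from a subset of one alphabet (possibly of two-letter words) onto a subset of another; $\mathcal A\overset{\phi}{\simeq}\mathcal A'$ means $\mathcal A'$ is obtained by replacing each symbol (resp. two-letter word) $a$ of $\mathcal A$ by $\phi(a)$; $\kappa(ab)=ba$. Symbolic matrix bisystem over $\Sigma^\pm$: $(\mathcal M^-_{l,l+1},\mathcal M^+_{l,l+1})_{l\ge0}$, $m(l)\times m(l+1)$ matrices over $\mathfrak S_{\Sigma^-},\mathfrak S_{\Sigma^+}$, no zero rows/columns, no symbol repeated within an entry or a column, $\mathcal M^-_{l,l+1}\mathcal M^+_{l+1,l+2}\overset{\kappa}{\simeq}\mathcal M^+_{l,l+1}\mathcal M^-_{l+1,l+2}$. FPCC: $m(0)=1$, $\Sigma^-=\Sigma^+$, and for each $l\ge1,j$ the words in $[\mathcal M^-_{0,1}\cdots\mathcal M^-_{l-1,l}](1,j)$ are the reversals of those in $[\mathcal M^+_{0,1}\cdots\mathcal M^+_{l-1,l}](1,j)$. Properly strong shift equivalent in 1-step ($\mathcal M$ over $\Sigma_\mathcal M$, $\mathcal N$ over $\Sigma_\mathcal N$, sizes $m(l),n(l)$): alphabets $C,D$, specifications $\varphi:\Sigma_\mathcal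 M\to C\cdot D$, $\phi:\Sigma_\mathcal N\to D\cdot C$, matrices $\mathcal P_l$ ($c(l)\times d(l+1)$ over $C$), $\mathcal Q_l$ ($d(l)\times c(l+1)$ over $D$), $\mathcal X_l$ over $D$ ($d(l)\times d(l+1)$, $l$ odd; $c(l)\times c(l+1)$, $l$ even), $\mathcal Y_l$ over $C$ ($c(l)\times c(l+1)$, $l$ odd; $d(l)\times d(l+1)$, $l$ even) with $\mathcal M^+_{l,l+1}\overset{\varphi}{\simeq}\mathcal P_{2l}\mathcal Q_{2l+1}$, $\mathcal N^+_{l,l+1}\overset{\phi}{\simeq}\mathcal Q_{2l}\mathcal P_{2l+1}$, $\mathcal M^-_{l,l+1}\overset{\kappa\varphi}{\simeq}\mathcal X_{2l}\mathcal Y_{2l+1}$, $\mathcal N^-_{l,l+1}\overset{\kappa\phi}{\simeq}\mathcal Y_{2l}\mathcal X_{2l+1}$, $\mathcal Y_{2l+1}\mathcal P_{2l+2}\overset{\kappa}{\simeq}\mathcal P_{2l+1}\mathcal Y_{2l+2}$, $\mathcal X_{2l+1}\mathcal Q_{2l+2}\overset{\kappa}{\simeq}\mathcal Q_{2l+1}\mathcal X_{2l+2}$, $\mathcal X_{2l}\mathcal P_{2l+1}\overset{\kappa}{\simeq}\mathcal P_{2l}\mathcal X_{2l+1}$, $\mathcal Y_{2l}\mathcal Q_{2l+1}\overset{\kappa}{\simeq}\mathcal Q_{2l}\mathcal Y_{2l+1}$ for all $l\ge0$. Strong shift equivalent in 1-step (for symbolic matrix bisystems $\mathcal M$ over $\Sigma^\pm_\mathcal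 M$, $\mathcal N$ over $\Sigma^\pm_\mathcal N$): there exist alphabets $C,D$, specifications $\varphi_1:\Sigma^-_\mathcal M\cdot\Sigma^+_\mathcal M\to C\cdot D$, $\varphi_2:\Sigma^-_\mathcal N\cdot\Sigma^+_\mathcal N\to D\cdot C$, $\phi^\pm_C:\Sigma^\pm_\mathcal M\cdot C\to C\cdot\Sigma^\pm_\mathcal N$, $\phi^\pm_D:\Sigma^\pm_\mathcal N\cdot D\to D\cdot\Sigma^\pm_\mathcal M$, and for each $l$ an $m(l)\times n(l+1)$ matrix $\mathcal H_l$ over $C$ and an $n(l)\times m(l+1)$ matrix $\mathcal K_l$ over $D$ with $\mathcal M^-_{l,l+1}\mathcal M^+_{l+1,l+2}\overset{\varphi_1}{\simeq}\mathcal H_l\mathcal K_{l+1}$, $\mathcal N^-_{l,l+1}\mathcal N^+_{l+1,l+2}\overset{\varphi_2}{\simeq}\mathcal K_l\mathcal H_{l+1}$, $\mathcal M^+_{l,l+1}\mathcal H_{l+1}\overset{\phi^+_C}{\simeq}\mathcal H_l\mathcal N^+_{l+1,l+2}$, $\mathcal N^+_{l,l+1}\mathcal K_{l+1}\overset{\phi^+_D}{\simeq}\mathcal K_l\mathcal M^+_{l+1,l+2}$, $\mathcal M^-_{l,l+1}\mathcal H_{l+1}\overset{\phi^-_C}{\simeq}\mathcal H_l\mathcal N^-_{l+1,l+2}$, $\mathcal N^-_{l,l+1}\mathcal K_{l+1}\overset{\phi^-_D}{\simeq}\mathcal K_l\mathcal M^-_{l+1,l+2}$. *)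

theory Defs
  imports Main "HOL-Library.Multiset"
begin

text \<open>A word is a list of symbols; a formal sum of words is a multiset of
  words. A symbolic matrix is a function of (row, column) indices (0-based), with its
  dimensions given separately.\<close>

type_synonym word = "nat list"
type_synonym smat = "nat \<Rightarrow> nat \<Rightarrow> word multiset"

definition words1 :: "nat set \<Rightarrow> word set" where
  "words1 A = {[a] | a. a \<in> A}"

definition words2 :: "nat set \<Rightarrow> nat set \<Rightarrow> word set" where
  "words2 A B = {[a, b] | a b. a \<in> A \<and> b \<in> B}"

definition over :: "nat set \<Rightarrow> nat \<Rightarrow> nat \<Rightarrow> smat \<Rightarrow> bool" where
  "over A r c M \<longleftrightarrow> (\<forall>i<r. \<forall>j<c. set_mset (M i j) \<subseteq> words1 A)"

definition mconc :: "word multiset \<Rightarrow> word multiset \<Rightarrow> word multiset" where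
  "mconc X Y = (\<Sum>u\<in>#X. image_mset (\<lambda>v. u @ v) Y)"

definition mprod :: "nat \<Rightarrow> smat \<Rightarrow> smat \<Rightarrow> smat" where
  "mprod k A B = (\<lambda>i j. \<Sum>t<k. mconc (A i t) (B t j))"

fun mpow :: "(nat \<Rightarrow> nat) \<Rightarrow> (nat \<Rightarrow> smat) \<Rightarrow> nat \<Rightarrow> smat" where
  "mpow m M 0 = (\<lambda>i j. if i = j then {#[]#} else {#})"
| "mpow m M (Suc l) = mprod (m l) (mpow m M l) (M l)"

definition is_spec :: "word set \<Rightarrow> word set \<Rightarrow> word set \<Rightarrow> (word \<Rightarrow> word) \<Rightarrow> bool" where
  "is_spec A B S \<phi> \<longleftrightarrow> S \<subseteq> A \<and> inj_on \<phi> S \<and> \<phi> ` S \<subseteq> B"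

definition sim :: "word set \<Rightarrow> (word \<Rightarrow> word) \<Rightarrow> nat \<Rightarrow> nat \<Rightarrow> smat
                    \<Rightarrow> nat \<Rightarrow> nat \<Rightarrow> smat \<Rightarrow> bool" where
  "sim S \<phi> r c A r' c' A' \<longleftrightarrow> r = r' \<and> c = c' \<and>
     (\<forall>i<r. \<forall>j<c. set_mset (A i j) \<subseteq> S \<and> A' i j = image_mset \<phi> (A i j))"

definition kappa :: "word \<Rightarrow> word" where
  "kappa w = rev w"

definition nozero :: "nat \<Rightarrow> nat \<Rightarrow> smat \<Rightarrow> bool" where
  "nozero r c M \<longleftrightarrow> (\<forall>i<r. \<exists>j<c. M i j \<noteq> {#}) \<and> (\<forall>j<c. \<exists>i<r. M i j \<noteq> {#})"

definition norep :: "nat \<Rightarrow> nat \<Rightarrow> smat \<Rightarrow> bool" where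
  "norep r c M \<longleftrightarrow> (\<forall>j<c. \<forall>w. (\<Sum>i<r. count (M i j) w) \<le> 1)"

definition bisystem :: "nat set \<Rightarrow> nat set \<Rightarrow> (nat \<Rightarrow> nat) \<Rightarrow> (nat \<Rightarrow> smat)
                          \<Rightarrow> (nat \<Rightarrow> smat) \<Rightarrow> bool" where
  "bisystem Am Ap m Mm Mp \<longleftrightarrow> finite Am \<and> finite Ap \<and>
    (\<forall>l. over Am (m l) (m (Suc l)) (Mm l) \<and> over Ap (m l) (m (Suc l)) (Mp l) \<and>
         nozero (m l) (m (Suc l)) (Mm l) \<and> nozero (m l) (m (Suc l)) (Mp l) \<and>
         norep (m l) (m (Suc l)) (Mm l) \<and> norep (m l) (m (Suc l)) (Mp l) \<and>
         sim (words2 Am Ap) kappa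
           (m l) (m (l + 2)) (mprod (m (Suc l)) (Mm l) (Mp (Suc l)))
           (m l) (m (l + 2)) (mprod (m (Suc l)) (Mp l) (Mm (Suc l))))"

definition FPCC :: "nat set \<Rightarrow> nat set \<Rightarrow> (nat \<Rightarrow> nat) \<Rightarrow> (nat \<Rightarrow> smat)
                      \<Rightarrow> (nat \<Rightarrow> smat) \<Rightarrow> bool" where
  "FPCC Am Ap m Mm Mp \<longleftrightarrow> m 0 = 1 \<and> Am = Ap \<and>
    (\<forall>l\<ge>1. \<forall>j<m l. mpow m Mm l 0 j = image_mset rev (mpow m Mp l 0 j))"

definition psse1 :: "nat set \<Rightarrow> (nat \<Rightarrow> nat) \<Rightarrow> (nat \<Rightarrow> smat) \<Rightarrow> (nat \<Rightarrow> smat)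
                      \<Rightarrow> nat set \<Rightarrow> (nat \<Rightarrow> nat) \<Rightarrow> (nat \<Rightarrow> smat) \<Rightarrow> (nat \<Rightarrow> smat) \<Rightarrow> bool" where
  "psse1 SM m Mm Mp SN n Nm Np \<longleftrightarrow>
    (\<exists>C D c d S\<phi> \<phi> S\<psi> \<psi> P Q X Y.
      finite C \<and> finite D \<and>
      is_spec (words1 SM) (words2 C D) S\<phi> \<phi> \<and> is_spec (words1 SN) (words2 D C) S\<psi> \<psi> \<and>
      (\<forall>l. over C (c l) (d (Suc l)) (P l) \<and> over D (d l) (c (Suc l)) (Q l) \<and>
           (if odd l then over D (d l) (d (Suc l)) (X l) \<and> over C (c l) (c (Suc l)) (Y l)
            else over D (c l) (c (Suc l)) (X l) \<and> over C (d l) (d (Suc l)) (Y l))) \<and>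
      (\<forall>l.
        sim S\<phi> \<phi> (m l) (m (Suc l)) (Mp l)
          (c (2*l)) (c (2*l+2)) (mprod (d (2*l+1)) (P (2*l)) (Q (2*l+1))) \<and>
        sim S\<psi> \<psi> (n l) (n (Suc l)) (Np l)
          (d (2*l)) (d (2*l+2)) (mprod (c (2*l+1)) (Q (2*l)) (P (2*l+1))) \<and>
        sim S\<phi> (kappa \<circ> \<phi>) (m l) (m (Suc l)) (Mm l)
          (c (2*l)) (c (2*l+2)) (mprod (c (2*l+1)) (X (2*l)) (Y (2*l+1))) \<and>
        sim S\<psi> (kappa \<circ> \<psi>) (n l) (n (Suc l)) (Nm l)
          (d (2*l)) (d (2*l+2)) (mprod (d (2*l+1)) (Y (2*l)) (X (2*l+1))) \<and>
        sim (words2 C C) kappa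
          (c (2*l+1)) (d (2*l+3)) (mprod (c (2*l+2)) (Y (2*l+1)) (P (2*l+2)))
          (c (2*l+1)) (d (2*l+3)) (mprod (d (2*l+2)) (P (2*l+1)) (Y (2*l+2))) \<and>
        sim (words2 D D) kappa
          (d (2*l+1)) (c (2*l+3)) (mprod (d (2*l+2)) (X (2*l+1)) (Q (2*l+2)))
          (d (2*l+1)) (c (2*l+3)) (mprod (c (2*l+2)) (Q (2*l+1)) (X (2*l+2))) \<and>
        sim (words2 D C) kappa
          (c (2*l)) (d (2*l+2)) (mprod (c (2*l+1)) (X (2*l)) (P (2*l+1)))
          (c (2*l)) (d (2*l+2)) (mprod (d (2*l+1)) (P (2*l)) (X (2*l+1))) \<and>
        sim (words2 C D) kappa
          (d (2*l)) (c (2*l+2)) (mprod (d (2*l+1)) (Y (2*l)) (Q (2*l+1)))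
          (d (2*l)) (c (2*l+2)) (mprod (c (2*l+1)) (Q (2*l)) (Y (2*l+1)))))"

definition sse1 :: "nat set \<Rightarrow> nat set \<Rightarrow> (nat \<Rightarrow> nat) \<Rightarrow> (nat \<Rightarrow> smat) \<Rightarrow> (nat \<Rightarrow> smat)
                     \<Rightarrow> nat set \<Rightarrow> nat set \<Rightarrow> (nat \<Rightarrow> nat) \<Rightarrow> (nat \<Rightarrow> smat) \<Rightarrow> (nat \<Rightarrow> smat)
                     \<Rightarrow> bool" where
  "sse1 SMm SMp m Mm Mp SNm SNp n Nm Np \<longleftrightarrow>
    (\<exists>C D S1 \<phi>1 S2 \<phi>2 SCp \<phi>Cp SCm \<phi>Cm SDp \<phi>Dp SDm \<phi>Dm H K.
      finite C \<and> finite D \<and>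
      is_spec (words2 SMm SMp) (words2 C D) S1 \<phi>1 \<and>
      is_spec (words2 SNm SNp) (words2 D C) S2 \<phi>2 \<and>
      is_spec (words2 SMp C) (words2 C SNp) SCp \<phi>Cp \<and>
      is_spec (words2 SMm C) (words2 C SNm) SCm \<phi>Cm \<and>
      is_spec (words2 SNp D) (words2 D SMp) SDp \<phi>Dp \<and>
      is_spec (words2 SNm D) (words2 D SMm) SDm \<phi>Dm \<and>
      (\<forall>l. over C (m l) (n (Suc l)) (H l) \<and> over D (n l) (m (Suc l)) (K l) \<and>
        sim S1 \<phi>1 (m l) (m (l+2)) (mprod (m (Suc l)) (Mm l) (Mp (Suc l)))
                  (m l) (m (l+2)) (mprod (n (Suc l)) (H l) (K (Suc l))) \<and>
        sim S2 \<phi>2 (n l) (n (l+2)) (mprod (n (Suc l)) (Nm l) (Np (Suc l)))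
                  (n l) (n (l+2)) (mprod (m (Suc l)) (K l) (H (Suc l))) \<and>
        sim SCp \<phi>Cp (m l) (n (l+2)) (mprod (m (Suc l)) (Mp l) (H (Suc l)))
                    (m l) (n (l+2)) (mprod (n (Suc l)) (H l) (Np (Suc l))) \<and>
        sim SDp \<phi>Dp (n l) (m (l+2)) (mprod (n (Suc l)) (Np l) (K (Suc l)))
                    (n l) (m (l+2)) (mprod (m (Suc l)) (K l) (Mp (Suc l))) \<and>
        sim SCm \<phi>Cm (m l) (n (l+2)) (mprod (m (Suc l)) (Mm l) (H (Suc l)))
                    (m l) (n (l+2)) (mprod (n (Suc l)) (H l) (Nm (Suc l))) \<and>
        sim SDm \<phi>Dm (n l) (m (l+2)) (mprod (n (Suc l)) (Nm l) (K (Suc l)))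
                    (n l) (m (l+2)) (mprod (m (Suc l)) (K l) (Mm (Suc l)))))"

end

theory Submission
  imports Defs "HOL-Library.Nat_Bijection"
begin

text \<open>Put H_l = X_2l P_2l+1 and K_l = Y_2l Q_2l+1, reading each two-letter word of these
  products as a single letter of the alphabet D x C (resp. C x D). Through the specifications,
  M-_l M+_l+1 is X_2l Y_2l+1 P_2l+2 Q_2l+3, and the exchange Y_2l+1 P_2l+2 ~ P_2l+1 Y_2l+2 turns it
  into X P Y Q = H_l K_l+1. Likewise M+_l H_l+1 = P Q X P becomes X P Q P = H_l N+_l+1 by the
  exchanges for X Q and X P, and M-_l H_l+1 = X Y X P becomes X P Y X = H_l N-_l+1 by those for
  X P and Y P. Each rearrangement is a fixed permutation of letter positions, so the induced
  correspondences between entries are specifications. The relations with M and N interchanged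
  follow by exchanging the roles of the two systems.\<close>

section \<open>Products of symbolic matrices\<close>

lemma mconc_empty_left [simp]: "mconc {#} Y = {#}"
  by (simp add: mconc_def)

lemma mconc_add_mset_left [simp]: "mconc (add_mset u X) Y = image_mset (\<lambda>v. u @ v) Y + mconc X Y"
  by (simp add: mconc_def)

lemma mconc_empty_right [simp]: "mconc X {#} = {#}"
  by (induction X) auto

lemma mconc_union_left: "mconc (X + X') Y = mconc X Y + mconc X' Y"
  by (simp add: mconc_def)

lemma mconc_union_right: "mconc X (Y + Y') = mconc X Y + mconc X Y'"
  by (induction X) auto

lemma mconc_sum_left: "mconc (\<Sum>t\<in>T. f t) Y = (\<Sum>t\<in>T. mconc (f t) Y)"
  by (induction T rule: infinite_finite_induct) (auto simp: mconc_union_left)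

lemma mconc_sum_right: "mconc Y (\<Sum>t\<in>T. f t) = (\<Sum>t\<in>T. mconc Y (f t))"
  by (induction T rule: infinite_finite_induct) (auto simp: mconc_union_right)

lemma mconc_image_prepend:
  "mconc (image_mset (\<lambda>v. u @ v) Y) Z = image_mset (\<lambda>w. u @ w) (mconc Y Z)"
  by (induction Y) (auto simp: mconc_union_left image_mset.compositionality comp_def)

lemma mconc_assoc: "mconc (mconc X Y) Z = mconc X (mconc Y Z)"
  by (induction X) (auto simp: mconc_union_left mconc_image_prepend)

lemma image_mset_mconc:
  assumes "\<And>u v. u \<in># A \<Longrightarrow> v \<in># B \<Longrightarrow> F (u @ v) = g u @ h v"
  shows "image_mset F (mconc A B) = mconc (image_mset g A) (image_mset h B)"
  using assms
proof (induction A)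
  case (add a A)
  have "image_mset F (image_mset (\<lambda>v. a @ v) B) = image_mset (\<lambda>v. g a @ v) (image_mset h B)"
    using add.prems by (auto simp: image_mset.compositionality intro!: image_mset_cong)
  then show ?case using add by simp
qed simp

lemma mem_mconcE:
  assumes "w \<in># mconc A B"
  obtains u v where "u \<in># A" "v \<in># B" "w = u @ v"
  using assms by (induction A) auto

lemma image_mset_sum: "image_mset F (\<Sum>t\<in>T. f t) = (\<Sum>t\<in>T. image_mset F (f t))"
  by (induction T rule: infinite_finite_induct) auto

lemma mprod_assoc: "mprod k' (mprod k A B) M = mprod k A (mprod k' B M)"
  unfolding mprod_def
  by (simp add: mconc_sum_left mconc_sum_right mconc_assoc sum.swap[of _ "{..<k'}"])

lemma mem_mprodE:
  assumes "w \<in># mprod k A B i j"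
  obtains t u v where "t < k" "u \<in># A i t" "v \<in># B t j" "w = u @ v"
  using assms unfolding mprod_def by (auto simp: set_mset_sum elim!: mem_mconcE)

lemma mprod_entry_drop:
  assumes "w \<in># mprod k A B i j" and "\<And>t u. t < k \<Longrightarrow> u \<in># A i t \<Longrightarrow> length u = p"
  shows "\<exists>t<k. drop p w \<in># B t j"
  using assms by (metis append_eq_conv_conj mem_mprodE)

lemma image_mset_mprod:
  assumes "\<And>t. t < k \<Longrightarrow> A' i t = image_mset g (A i t)"
    and "\<And>t. t < k \<Longrightarrow> B' t j = image_mset h (B t j)"
    and "\<And>t u v. t < k \<Longrightarrow> u \<in># A i t \<Longrightarrow> v \<in># B t j \<Longrightarrow> F (u @ v) = g u @ h v"
  shows "image_mset F (mprod k A B i j) = mprod k A' B' i j"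
  unfolding mprod_def using assms
  by (auto simp: image_mset_sum image_mset_mconc intro!: sum.cong)

definition swap_at :: "nat \<Rightarrow> word \<Rightarrow> word" where
  "swap_at p w = take p w @ rev (take 2 (drop p w)) @ drop (p + 2) w"

lemma swap_at_append: "length u = p \<Longrightarrow> swap_at (p + q) (u @ v) = u @ swap_at q v"
  by (simp add: swap_at_def add.assoc)

lemma swap_at_0_append: "length u = 2 \<Longrightarrow> swap_at 0 (u @ v) = rev u @ v"
  by (simp add: swap_at_def)

lemma mprod_swap_at_left:
  assumes "\<And>t. t < k \<Longrightarrow> A' i t = image_mset (swap_at 0) (A i t)"
    and "\<And>t u. t < k \<Longrightarrow> u \<in># A i t \<Longrightarrow> length u = 2"
  shows "mprod k A' B i j = image_mset (swap_at 0) (mprod k A B i j)"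
  by (rule image_mset_mprod[where g = "swap_at 0" and h = id, symmetric])
     (use assms in \<open>auto simp: swap_at_0_append swap_at_def\<close>)

lemma mprod_swap_at_right:
  assumes "\<And>t. t < k \<Longrightarrow> B' t j = image_mset (swap_at q) (B t j)"
    and "\<And>t u. t < k \<Longrightarrow> u \<in># A i t \<Longrightarrow> length u = p"
  shows "mprod k A B' i j = image_mset (swap_at (p + q)) (mprod k A B i j)"
  by (rule image_mset_mprod[where g = id, symmetric]) (use assms in \<open>auto simp: swap_at_append\<close>)

lemma over_entry: "over A r c M \<Longrightarrow> i < r \<Longrightarrow> j < c \<Longrightarrow> w \<in># M i j \<Longrightarrow> \<exists>a. w = [a] \<and> a \<in> A"
  by (auto simp: over_def words1_def)

lemma over_mprod_entry:
  "over A r k M \<Longrightarrow> over B k c N \<Longrightarrow> i < r \<Longrightarrow> j < c \<Longrightarrow> w \<in># mprod k M N i j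
    \<Longrightarrow> \<exists>a b. w = [a, b] \<and> a \<in> A \<and> b \<in> B"
  by (fastforce elim: mem_mprodE dest: over_entry)

lemma length_over_entry: "over A r c M \<Longrightarrow> i < r \<Longrightarrow> j < c \<Longrightarrow> w \<in># M i j \<Longrightarrow> length w = 1"
  by (auto dest: over_entry)

lemma length_over_mprod_entry:
  "over A r k M \<Longrightarrow> over B k c N \<Longrightarrow> i < r \<Longrightarrow> j < c \<Longrightarrow> w \<in># mprod k M N i j \<Longrightarrow> length w = 2"
  by (auto dest: over_mprod_entry)

lemma simI:
  "(\<And>i j. i < r \<Longrightarrow> j < c \<Longrightarrow> set_mset (A i j) \<subseteq> S \<and> B i j = image_mset \<phi> (A i j))
    \<Longrightarrow> sim S \<phi> r c A r c B"
  by (simp add: sim_def)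

lemma sim_dims: "sim S \<phi> r c A r' c' A' \<Longrightarrow> r' = r \<and> c' = c"
  by (simp add: sim_def)

lemma sim_entry: "sim S \<phi> r c A r' c' A' \<Longrightarrow> i < r \<Longrightarrow> j < c \<Longrightarrow> w \<in># A' i j \<Longrightarrow> \<exists>a\<in>S. w = \<phi> a"
  unfolding sim_def by auto

lemma sim_inv_image:
  assumes "sim S \<phi> r c A r' c' A'" "inj_on \<phi> S" "i < r" "j < c"
  shows "A i j = image_mset (inv_into S \<phi>) (A' i j)"
proof -
  have "set_mset (A i j) \<subseteq> S" and "A' i j = image_mset \<phi> (A i j)"
    using assms(1,3,4) by (auto simp: sim_def)
  moreover have "image_mset (inv_into S \<phi> \<circ> \<phi>) (A i j) = image_mset id (A i j)"
    using calculation(1) assms(2) by (intro image_mset_cong) auto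
  ultimately show ?thesis
    by (simp add: image_mset.compositionality)
qed

lemma kappa_eq_rev: "kappa = rev"
  by (simp add: kappa_def fun_eq_iff)

lemma sim_kappa_swap:
  assumes "sim (words2 A B) kappa r c M r' c' M'" "i < r" "j < c"
  shows "M' i j = image_mset (swap_at 0) (M i j)"
    and "M i j = image_mset (swap_at 0) (M' i j)"
proof -
  have M: "set_mset (M i j) \<subseteq> words2 A B" and M': "M' i j = image_mset rev (M i j)"
    using assms by (auto simp: sim_def kappa_eq_rev)
  show "M' i j = image_mset (swap_at 0) (M i j)"
    unfolding M' using M by (intro image_mset_cong) (auto simp: words2_def swap_at_def)
  show "M i j = image_mset (swap_at 0) (M' i j)"
  proof -
    have "image_mset (swap_at 0 \<circ> rev) (M i j) = image_mset id (M i j)"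
      using M by (intro image_mset_cong) (auto simp: words2_def swap_at_def)
    then show ?thesis
      by (simp add: M' image_mset.compositionality)
  qed
qed

lemma sim_kappa_words2_length:
  assumes "sim (words2 A B) kappa r c M r' c' M'" "i < r" "j < c"
  shows "u \<in># M i j \<Longrightarrow> length u = 2" and "u \<in># M' i j \<Longrightarrow> length u = 2"
  using assms by (fastforce simp: sim_def kappa_def words2_def)+

lemma image_mset_relabel:
  assumes "A = image_mset G W" "B = image_mset E W'" "W' = image_mset \<sigma> W"
    and "\<And>w. w \<in># W \<Longrightarrow> G w \<in> S \<and> \<phi> (G w) = E (\<sigma> w)"
  shows "set_mset A \<subseteq> S \<and> B = image_mset \<phi> A"
  using assms by (auto simp: image_mset.compositionality intro: image_mset_cong)

lemma spec_entry:
  "is_spec (words1 SM) (words2 C D) S\<phi> \<phi> \<Longrightarrow> a \<in> S\<phi> \<Longrightarrow>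
    \<exists>a0 a1 a2. a = [a0] \<and> a0 \<in> SM \<and> \<phi> a = [a1, a2] \<and> a1 \<in> C \<and> a2 \<in> D"
  unfolding is_spec_def words1_def words2_def by blast

section \<open>Fused products and the new specifications\<close>

text \<open>A two-letter word a b becomes the single letter <a, b>, encoded by prod_encode; this is
  how the alphabets D x C and C x D of the new matrices are realised inside nat.\<close>

definition fuse :: "word \<Rightarrow> word" where
  "fuse w = [prod_encode (w ! 0, w ! 1)]"

definition fused_mprod :: "nat \<Rightarrow> smat \<Rightarrow> smat \<Rightarrow> smat" where
  "fused_mprod k A B = (\<lambda>i j. image_mset fuse (mprod k A B i j))"

lemma over_fused_mprod:
  "over A r k M \<Longrightarrow> over B k c N \<Longrightarrow> over (prod_encode ` (A \<times> B)) r c (fused_mprod k M N)"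
  unfolding over_def[of "prod_encode ` _"] fused_mprod_def words1_def
  by (fastforce dest: over_mprod_entry simp: fuse_def)

text \<open>With phi [a] = [a1, a2] and phi [b] = [b1, b2], an entry [a, b] of M- M+ expands to
  kappa (phi [a]) phi [b] = a2 a1 b1 b2 in X Y P Q; exchanging the middle letters gives X P Y Q,
  fused as <a2, b1> <a1, b2>. With phi [b] = [p, q], an entry [b, <x, p'>] of M+ H expands to
  p q x p' in P Q X P, rearranged to x p q p' in X P Q P, i.e. <x, p> followed by the psi-preimage
  of q p'. An entry [a, <x, p>] of M- H expands to a2 a1 x p in X Y X P, rearranged to a2 p a1 x
  in X P Y X, i.e. <a2, p> followed by the (kappa o psi)-preimage of a1 x.\<close>

definition merge_dom :: "word set \<Rightarrow> word set" where
  "merge_dom S\<phi> = {[a, b] | a b. [a] \<in> S\<phi> \<and> [b] \<in> S\<phi>}"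

definition merge_map :: "(word \<Rightarrow> word) \<Rightarrow> word \<Rightarrow> word" where
  "merge_map \<phi> w =
    [prod_encode (\<phi> [w ! 0] ! 1, \<phi> [w ! 1] ! 0), prod_encode (\<phi> [w ! 0] ! 0, \<phi> [w ! 1] ! 1)]"

definition commute_plus_dom ::
    "nat set \<Rightarrow> nat set \<Rightarrow> word set \<Rightarrow> (word \<Rightarrow> word) \<Rightarrow> word set \<Rightarrow> (word \<Rightarrow> word) \<Rightarrow> word set" where
  "commute_plus_dom C D S\<phi> \<phi> S\<psi> \<psi> =
    {[b, prod_encode (x, p)] | b x p. [b] \<in> S\<phi> \<and> x \<in> D \<and> p \<in> C \<and> [\<phi> [b] ! 1, p] \<in> \<psi> ` S\<psi>}"

definition commute_plus_map :: "(word \<Rightarrow> word) \<Rightarrow> word set \<Rightarrow> (word \<Rightarrow> word) \<Rightarrow> word \<Rightarrow> word" where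
  "commute_plus_map \<phi> S\<psi> \<psi> w =
    prod_encode (fst (prod_decode (w ! 1)), \<phi> [w ! 0] ! 0) #
      inv_into S\<psi> \<psi> [\<phi> [w ! 0] ! 1, snd (prod_decode (w ! 1))]"

definition commute_minus_dom ::
    "nat set \<Rightarrow> nat set \<Rightarrow> word set \<Rightarrow> (word \<Rightarrow> word) \<Rightarrow> word set \<Rightarrow> (word \<Rightarrow> word) \<Rightarrow> word set" where
  "commute_minus_dom C D S\<phi> \<phi> S\<psi> \<psi> =
    {[a, prod_encode (x, p)] | a x p.
       [a] \<in> S\<phi> \<and> x \<in> D \<and> p \<in> C \<and> [\<phi> [a] ! 0, x] \<in> (kappa \<circ> \<psi>) ` S\<psi>}"

definition commute_minus_map :: "(word \<Rightarrow> word) \<Rightarrow> word set \<Rightarrow> (word \<Rightarrow> word) \<Rightarrow> word \<Rightarrow> word" where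
  "commute_minus_map \<phi> S\<psi> \<psi> w =
    prod_encode (\<phi> [w ! 0] ! 1, snd (prod_decode (w ! 1))) #
      inv_into S\<psi> (kappa \<circ> \<psi>) [\<phi> [w ! 0] ! 0, fst (prod_decode (w ! 1))]"

lemma is_spec_merge:
  assumes spec: "is_spec (words1 SM) (words2 C D) S\<phi> \<phi>"
  shows "is_spec (words2 SM SM) (words2 (prod_encode ` (D \<times> C)) (prod_encode ` (C \<times> D)))
           (merge_dom S\<phi>) (merge_map \<phi>)"
proof -
  have inj: "inj_on \<phi> S\<phi>" using spec by (simp add: is_spec_def)
  have "merge_dom S\<phi> \<subseteq> words2 SM SM"
    using spec unfolding merge_dom_def is_spec_def words1_def words2_def by auto
  moreover have "merge_map \<phi> ` merge_dom S\<phi> \<subseteq> words2 (prod_encode ` (D \<times> C)) (prod_encode ` (C \<times> D))"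
  proof
    fix y assume "y \<in> merge_map \<phi> ` merge_dom S\<phi>"
    then obtain a b where ab: "[a] \<in> S\<phi>" "[b] \<in> S\<phi>" "y = merge_map \<phi> [a, b]"
      unfolding merge_dom_def by auto
    obtain a1 a2 where "\<phi> [a] = [a1, a2]" "a1 \<in> C" "a2 \<in> D" using spec_entry[OF spec ab(1)] by blast
    moreover obtain b1 b2 where "\<phi> [b] = [b1, b2]" "b1 \<in> C" "b2 \<in> D"
      using spec_entry[OF spec ab(2)] by blast
    ultimately show "y \<in> words2 (prod_encode ` (D \<times> C)) (prod_encode ` (C \<times> D))"
      using ab(3) by (auto simp: merge_map_def words2_def)
  qed
  moreover have "inj_on (merge_map \<phi>) (merge_dom S\<phi>)"
  proof (rule inj_onI)
    fix x y assume "x \<in> merge_dom S\<phi>" "y \<in> merge_dom S\<phi>" and e: "merge_map \<phi> x = merge_map \<phi> y"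
    then obtain a b a' b' where ab: "[a] \<in> S\<phi>" "[b] \<in> S\<phi>" "x = [a, b]"
      and ab': "[a'] \<in> S\<phi>" "[b'] \<in> S\<phi>" "y = [a', b']"
      unfolding merge_dom_def by auto
    obtain a1 a2 a1' a2' b1 b2 b1' b2' where
      "\<phi> [a] = [a1, a2]" "\<phi> [b] = [b1, b2]" "\<phi> [a'] = [a1', a2']" "\<phi> [b'] = [b1', b2']"
      using spec_entry[OF spec ab(1)] spec_entry[OF spec ab(2)]
        spec_entry[OF spec ab'(1)] spec_entry[OF spec ab'(2)] by metis
    with e ab ab' have "\<phi> [a] = \<phi> [a']" "\<phi> [b] = \<phi> [b']"
      by (simp_all add: merge_map_def prod_encode_eq)
    then show "x = y" using inj ab ab' by (auto dest: inj_onD)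
  qed
  ultimately show ?thesis by (simp add: is_spec_def)
qed

lemma is_spec_commute_plus:
  assumes spec_\<phi>: "is_spec (words1 SM) (words2 C D) S\<phi> \<phi>"
    and spec_\<psi>: "is_spec (words1 SN) (words2 D C) S\<psi> \<psi>"
  shows "is_spec (words2 SM (prod_encode ` (D \<times> C))) (words2 (prod_encode ` (D \<times> C)) SN)
           (commute_plus_dom C D S\<phi> \<phi> S\<psi> \<psi>) (commute_plus_map \<phi> S\<psi> \<psi>)"
proof -
  have inj_\<phi>: "inj_on \<phi> S\<phi>" using spec_\<phi> by (simp add: is_spec_def)
  have "commute_plus_dom C D S\<phi> \<phi> S\<psi> \<psi> \<subseteq> words2 SM (prod_encode ` (D \<times> C))"
    using spec_\<phi> unfolding commute_plus_dom_def is_spec_def words1_def words2_def by auto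
  moreover have "commute_plus_map \<phi> S\<psi> \<psi> ` commute_plus_dom C D S\<phi> \<phi> S\<psi> \<psi>
      \<subseteq> words2 (prod_encode ` (D \<times> C)) SN"
  proof
    fix y assume "y \<in> commute_plus_map \<phi> S\<psi> \<psi> ` commute_plus_dom C D S\<phi> \<phi> S\<psi> \<psi>"
    then obtain b x p where b: "[b] \<in> S\<phi>" "x \<in> D" "[\<phi> [b] ! 1, p] \<in> \<psi> ` S\<psi>"
      and y: "y = commute_plus_map \<phi> S\<psi> \<psi> [b, prod_encode (x, p)]"
      unfolding commute_plus_dom_def by auto
    obtain b1 b2 where B: "\<phi> [b] = [b1, b2]" "b1 \<in> C" using spec_entry[OF spec_\<phi> b(1)] by blast
    have "inv_into S\<psi> \<psi> [b2, p] \<in> S\<psi>" using b(3) B by (simp add: inv_into_into)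
    then obtain n0 where "inv_into S\<psi> \<psi> [b2, p] = [n0]" "n0 \<in> SN"
      using spec_\<psi> unfolding is_spec_def words1_def by auto
    then show "y \<in> words2 (prod_encode ` (D \<times> C)) SN"
      using b B y by (auto simp: commute_plus_map_def words2_def)
  qed
  moreover have "inj_on (commute_plus_map \<phi> S\<psi> \<psi>) (commute_plus_dom C D S\<phi> \<phi> S\<psi> \<psi>)"
  proof (rule inj_onI)
    fix w w' assume "w \<in> commute_plus_dom C D S\<phi> \<phi> S\<psi> \<psi>" "w' \<in> commute_plus_dom C D S\<phi> \<phi> S\<psi> \<psi>"
      and e: "commute_plus_map \<phi> S\<psi> \<psi> w = commute_plus_map \<phi> S\<psi> \<psi> w'"
    then obtain b x p b' x' p' where
      b: "[b] \<in> S\<phi>" "[\<phi> [b] ! 1, p] \<in> \<psi> ` S\<psi>" "w = [b, prod_encode (x, p)]" and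
      b': "[b'] \<in> S\<phi>" "[\<phi> [b'] ! 1, p'] \<in> \<psi> ` S\<psi>" "w' = [b', prod_encode (x', p')]"
      unfolding commute_plus_dom_def by auto
    obtain b1 b2 b1' b2' where B: "\<phi> [b] = [b1, b2]" "\<phi> [b'] = [b1', b2']"
      using spec_entry[OF spec_\<phi> b(1)] spec_entry[OF spec_\<phi> b'(1)] by metis
    have "x = x'" "b1 = b1'" and "inv_into S\<psi> \<psi> [b2, p] = inv_into S\<psi> \<psi> [b2', p']"
      using e b b' B by (simp_all add: commute_plus_map_def prod_encode_eq)
    then have "[b2, p] = [b2', p']"
      using b(2) b'(2) B by (metis f_inv_into_f nth_Cons_0 nth_Cons_Suc One_nat_def)
    then have "\<phi> [b] = \<phi> [b']" "p = p'" using B \<open>b1 = b1'\<close> by auto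
    then show "w = w'" using inj_\<phi> b b' \<open>x = x'\<close> by (auto dest: inj_onD)
  qed
  ultimately show ?thesis by (simp add: is_spec_def)
qed

lemma is_spec_commute_minus:
  assumes spec_\<phi>: "is_spec (words1 SM) (words2 C D) S\<phi> \<phi>"
    and spec_\<psi>: "is_spec (words1 SN) (words2 D C) S\<psi> \<psi>"
  shows "is_spec (words2 SM (prod_encode ` (D \<times> C))) (words2 (prod_encode ` (D \<times> C)) SN)
           (commute_minus_dom C D S\<phi> \<phi> S\<psi> \<psi>) (commute_minus_map \<phi> S\<psi> \<psi>)"
proof -
  have inj_\<phi>: "inj_on \<phi> S\<phi>" using spec_\<phi> by (simp add: is_spec_def)
  have "commute_minus_dom C D S\<phi> \<phi> S\<psi> \<psi> \<subseteq> words2 SM (prod_encode ` (D \<times> C))"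
    using spec_\<phi> unfolding commute_minus_dom_def is_spec_def words1_def words2_def by auto
  moreover have "commute_minus_map \<phi> S\<psi> \<psi> ` commute_minus_dom C D S\<phi> \<phi> S\<psi> \<psi>
      \<subseteq> words2 (prod_encode ` (D \<times> C)) SN"
  proof
    fix y assume "y \<in> commute_minus_map \<phi> S\<psi> \<psi> ` commute_minus_dom C D S\<phi> \<phi> S\<psi> \<psi>"
    then obtain a x p where a: "[a] \<in> S\<phi>" "p \<in> C" "[\<phi> [a] ! 0, x] \<in> (kappa \<circ> \<psi>) ` S\<psi>"
      and y: "y = commute_minus_map \<phi> S\<psi> \<psi> [a, prod_encode (x, p)]"
      unfolding commute_minus_dom_def by auto
    obtain a1 a2 where A: "\<phi> [a] = [a1, a2]" "a2 \<in> D" using spec_entry[OF spec_\<phi> a(1)] by blast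
    have "inv_into S\<psi> (kappa \<circ> \<psi>) [a1, x] \<in> S\<psi>" using a(3) A by (simp add: inv_into_into)
    then obtain n0 where "inv_into S\<psi> (kappa \<circ> \<psi>) [a1, x] = [n0]" "n0 \<in> SN"
      using spec_\<psi> unfolding is_spec_def words1_def by auto
    then show "y \<in> words2 (prod_encode ` (D \<times> C)) SN"
      using a A y by (auto simp: commute_minus_map_def words2_def)
  qed
  moreover have "inj_on (commute_minus_map \<phi> S\<psi> \<psi>) (commute_minus_dom C D S\<phi> \<phi> S\<psi> \<psi>)"
  proof (rule inj_onI)
    fix w w' assume "w \<in> commute_minus_dom C D S\<phi> \<phi> S\<psi> \<psi>" "w' \<in> commute_minus_dom C D S\<phi> \<phi> S\<psi> \<psi>"
      and e: "commute_minus_map \<phi> S\<psi> \<psi> w = commute_minus_map \<phi> S\<psi> \<psi> w'"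
    then obtain a x p a' x' p' where
      a: "[a] \<in> S\<phi>" "[\<phi> [a] ! 0, x] \<in> (kappa \<circ> \<psi>) ` S\<psi>" "w = [a, prod_encode (x, p)]" and
      a': "[a'] \<in> S\<phi>" "[\<phi> [a'] ! 0, x'] \<in> (kappa \<circ> \<psi>) ` S\<psi>" "w' = [a', prod_encode (x', p')]"
      unfolding commute_minus_dom_def by auto
    obtain a1 a2 a1' a2' where A: "\<phi> [a] = [a1, a2]" "\<phi> [a'] = [a1', a2']"
      using spec_entry[OF spec_\<phi> a(1)] spec_entry[OF spec_\<phi> a'(1)] by metis
    have "a2 = a2'" "p = p'"
      and "inv_into S\<psi> (kappa \<circ> \<psi>) [a1, x] = inv_into S\<psi> (kappa \<circ> \<psi>) [a1', x']"
      using e a a' A by (simp_all add: commute_minus_map_def prod_encode_eq)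
    then have "[a1, x] = [a1', x']"
      using a(2) a'(2) A by (metis f_inv_into_f nth_Cons_0)
    then have "\<phi> [a] = \<phi> [a']" "x = x'" using A \<open>a2 = a2'\<close> by auto
    then show "w = w'" using inj_\<phi> a a' \<open>p = p'\<close> by (auto dest: inj_onD)
  qed
  ultimately show ?thesis by (simp add: is_spec_def)
qed

lemma sim_merge_map:
  fixes \<phi> :: "word \<Rightarrow> word"
  assumes spec: "is_spec (words1 SM) (words2 C D) S\<phi> \<phi>"
    and X0: "over D r k1 X0" and Y1: "over C k1 s Y1" and P1: "over C k1 k3 P1"
    and Mm: "sim S\<phi> (kappa \<circ> \<phi>) r s Mm r s (mprod k1 X0 Y1)"
    and Mp: "sim S\<phi> \<phi> s t Mp s t (mprod k4 P2 Q3)"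
    and YP: "sim (words2 C C) kappa k1 k4 (mprod s Y1 P2) k1 k4 (mprod k3 P1 Y2)"
  shows "sim (merge_dom S\<phi>) (merge_map \<phi>) r t (mprod s Mm Mp)
           r t (mprod k3 (fused_mprod k1 X0 P1) (fused_mprod k4 Y2 Q3))"
proof (rule simI)
  fix i j assume i: "i < r" and j: "j < t"
  have inj: "inj_on \<phi> S\<phi>" using spec by (simp add: is_spec_def)
  then have inj_k: "inj_on (kappa \<circ> \<phi>) S\<phi>" by (auto simp: inj_on_def kappa_def)
  txt \<open>Both sides relabel the entries of X Y P Q and of X P Y Q, which differ by a swap.\<close>
  define W where "W = mprod s (mprod k1 X0 Y1) (mprod k4 P2 Q3) i j"
  define W' where "W' = mprod k3 (mprod k1 X0 P1) (mprod k4 Y2 Q3) i j"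
  define G where "G w = inv_into S\<phi> (kappa \<circ> \<phi>) (take 2 w) @ inv_into S\<phi> \<phi> (drop 2 w)" for w
  define E where "E w = fuse (take 2 w) @ fuse (drop 2 w)" for w
  have L: "mprod s Mm Mp i j = image_mset G W"
    unfolding W_def
    by (rule image_mset_mprod[symmetric])
       (use sim_inv_image[OF Mm inj_k i] sim_inv_image[OF Mp inj _ j]
            length_over_mprod_entry[OF X0 Y1 i] in \<open>auto simp: G_def\<close>)
  have R: "mprod k3 (fused_mprod k1 X0 P1) (fused_mprod k4 Y2 Q3) i j = image_mset E W'"
    unfolding W'_def
    by (rule image_mset_mprod[symmetric])
       (use length_over_mprod_entry[OF X0 P1 i] in \<open>auto simp: E_def fused_mprod_def\<close>)
  have W': "W' = image_mset (swap_at 1) W"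
  proof -
    have "mprod k4 (mprod k3 P1 Y2) Q3 s' j = image_mset (swap_at 0) (mprod k4 (mprod s Y1 P2) Q3 s' j)"
      if "s' < k1" for s'
      by (rule mprod_swap_at_left)
         (use sim_kappa_swap(1)[OF YP that] sim_kappa_words2_length(1)[OF YP that] in auto)
    then have "mprod k1 X0 (mprod k4 (mprod k3 P1 Y2) Q3) i j
        = image_mset (swap_at (1 + 0)) (mprod k1 X0 (mprod k4 (mprod s Y1 P2) Q3) i j)"
      by (intro mprod_swap_at_right) (use length_over_entry[OF X0 i] in auto)
    then show ?thesis unfolding W_def W'_def mprod_assoc by simp
  qed
  have "G w \<in> merge_dom S\<phi> \<and> merge_map \<phi> (G w) = E (swap_at 1 w)" if "w \<in># W" for w
  proof -
    obtain t' u v where t': "t' < s" and u: "u \<in># mprod k1 X0 Y1 i t'"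
      and v: "v \<in># mprod k4 P2 Q3 t' j" and w: "w = u @ v"
      using \<open>w \<in># W\<close> unfolding W_def by (rule mem_mprodE)
    obtain a where a: "a \<in> S\<phi>" "u = kappa (\<phi> a)" using sim_entry[OF Mm i t' u] by auto
    obtain b where b: "b \<in> S\<phi>" "v = \<phi> b" using sim_entry[OF Mp t' j v] by auto
    obtain a0 a1 a2 where A: "a = [a0]" "\<phi> a = [a1, a2]" using spec_entry[OF spec a(1)] by blast
    obtain b0 b1 b2 where B: "b = [b0]" "\<phi> b = [b1, b2]" using spec_entry[OF spec b(1)] by blast
    have "G w = [a0, b0]"
      using a b A B inv_into_f_f[OF inj_k a(1)] inv_into_f_f[OF inj b(1)]
      by (simp add: G_def w kappa_def)
    then show ?thesis
      using a b A B
      by (simp add: merge_dom_def merge_map_def E_def fuse_def swap_at_def w kappa_def numeral_2_eq_2)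
  qed
  then show "set_mset (mprod s Mm Mp i j) \<subseteq> merge_dom S\<phi> \<and>
      mprod k3 (fused_mprod k1 X0 P1) (fused_mprod k4 Y2 Q3) i j
        = image_mset (merge_map \<phi>) (mprod s Mm Mp i j)"
    by (rule image_mset_relabel[OF L R W'])
qed

lemma sim_commute_plus_map:
  fixes \<phi> \<psi> :: "word \<Rightarrow> word"
  assumes spec_\<phi>: "is_spec (words1 SM) (words2 C D) S\<phi> \<phi>"
    and spec_\<psi>: "is_spec (words1 SN) (words2 D C) S\<psi> \<psi>"
    and P0: "over C r k0 P0" and Q1: "over D k0 s Q1" and X2: "over D s k3 X2" and P3: "over C k3 t P3"
    and X0: "over D r k1 X0" and P1: "over C k1 k2 P1"
    and Mp: "sim S\<phi> \<phi> r s Mp r s (mprod k0 P0 Q1)"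
    and Np: "sim S\<psi> \<psi> k2 t Np k2 t (mprod k3 Q2 P3)"
    and XQ: "sim (words2 D D) kappa k0 k3 (mprod k2 X1 Q2) k0 k3 (mprod s Q1 X2)"
    and XP: "sim (words2 D C) kappa r k2 (mprod k1 X0 P1) r k2 (mprod k0 P0 X1)"
  shows "sim (commute_plus_dom C D S\<phi> \<phi> S\<psi> \<psi>) (commute_plus_map \<phi> S\<psi> \<psi>)
           r t (mprod s Mp (fused_mprod k3 X2 P3)) r t (mprod k2 (fused_mprod k1 X0 P1) Np)"
proof (rule simI)
  fix i j assume i: "i < r" and j: "j < t"
  have inj_\<phi>: "inj_on \<phi> S\<phi>" using spec_\<phi> by (simp add: is_spec_def)
  have inj_\<psi>: "inj_on \<psi> S\<psi>" using spec_\<psi> by (simp add: is_spec_def)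
  define W where "W = mprod s (mprod k0 P0 Q1) (mprod k3 X2 P3) i j"
  define W' where "W' = mprod k2 (mprod k1 X0 P1) (mprod k3 Q2 P3) i j"
  define G where "G w = inv_into S\<phi> \<phi> (take 2 w) @ fuse (drop 2 w)" for w
  define E where "E w = fuse (take 2 w) @ inv_into S\<psi> \<psi> (drop 2 w)" for w
  have L: "mprod s Mp (fused_mprod k3 X2 P3) i j = image_mset G W"
    unfolding W_def
    by (rule image_mset_mprod[symmetric])
       (use sim_inv_image[OF Mp inj_\<phi> i] length_over_mprod_entry[OF P0 Q1 i]
         in \<open>auto simp: G_def fused_mprod_def\<close>)
  have length_X0P1: "length u = 2" if "t' < k2" "u \<in># mprod k1 X0 P1 i t'" for t' u
    using length_over_mprod_entry[OF X0 P1 i that] .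
  have R: "mprod k2 (fused_mprod k1 X0 P1) Np i j = image_mset E W'"
    unfolding W'_def
    by (rule image_mset_mprod[symmetric])
       (use sim_inv_image[OF Np inj_\<psi> _ j] length_X0P1 in \<open>auto simp: E_def fused_mprod_def\<close>)
  have W': "W' = image_mset (swap_at 0 \<circ> swap_at 1) W"
  proof -
    have "mprod k3 (mprod k2 X1 Q2) P3 s' j = image_mset (swap_at 0) (mprod k3 (mprod s Q1 X2) P3 s' j)"
      if "s' < k0" for s'
      by (rule mprod_swap_at_left)
         (use sim_kappa_swap(2)[OF XQ that] sim_kappa_words2_length(2)[OF XQ that] in auto)
    then have "mprod k0 P0 (mprod k3 (mprod k2 X1 Q2) P3) i j
        = image_mset (swap_at (1 + 0)) (mprod k0 P0 (mprod k3 (mprod s Q1 X2) P3) i j)"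
      by (intro mprod_swap_at_right) (use length_over_entry[OF P0 i] in auto)
    then have "mprod k2 (mprod k0 P0 X1) (mprod k3 Q2 P3) i j = image_mset (swap_at 1) W"
      unfolding W_def mprod_assoc by simp
    moreover have "W' = image_mset (swap_at 0) (mprod k2 (mprod k0 P0 X1) (mprod k3 Q2 P3) i j)"
      unfolding W'_def
      by (rule mprod_swap_at_left)
         (use sim_kappa_swap(2)[OF XP i] sim_kappa_words2_length(2)[OF XP i] in auto)
    ultimately show ?thesis by (simp add: image_mset.compositionality)
  qed
  have "G w \<in> commute_plus_dom C D S\<phi> \<phi> S\<psi> \<psi> \<and>
      commute_plus_map \<phi> S\<psi> \<psi> (G w) = E (swap_at 0 (swap_at 1 w))"
    if "w \<in># W" for w
  proof -
    obtain t' u v where t': "t' < s" and u: "u \<in># mprod k0 P0 Q1 i t'"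
      and v: "v \<in># mprod k3 X2 P3 t' j" and w: "w = u @ v"
      using \<open>w \<in># W\<close> unfolding W_def by (rule mem_mprodE)
    obtain b where b: "b \<in> S\<phi>" "u = \<phi> b" using sim_entry[OF Mp i t' u] by auto
    obtain b0 p q where B: "b = [b0]" "\<phi> b = [p, q]" using spec_entry[OF spec_\<phi> b(1)] by blast
    obtain x p' where v_eq: "v = [x, p']" "x \<in> D" "p' \<in> C"
      using over_mprod_entry[OF X2 P3 t' j v] by blast
    have "[x, p, q, p'] \<in># W'"
      using \<open>w \<in># W\<close> b B v_eq unfolding W' by (force simp: w swap_at_def)
    then obtain t'' where "t'' < k2" "[q, p'] \<in># mprod k3 Q2 P3 t'' j"
      unfolding W'_def using mprod_entry_drop[OF _ length_X0P1, of "[x, p, q, p']"] by force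
    then have "[q, p'] \<in> \<psi> ` S\<psi>" using sim_entry[OF Np _ j] by blast
    moreover have "G w = [b0, prod_encode (x, p')]"
      using b B v_eq inv_into_f_f[OF inj_\<phi> b(1)] by (simp add: G_def w fuse_def)
    ultimately show ?thesis
      using b B v_eq
      by (auto simp: commute_plus_dom_def commute_plus_map_def
          E_def fuse_def swap_at_def w numeral_2_eq_2)
  qed
  then show "set_mset (mprod s Mp (fused_mprod k3 X2 P3) i j) \<subseteq> commute_plus_dom C D S\<phi> \<phi> S\<psi> \<psi> \<and>
      mprod k2 (fused_mprod k1 X0 P1) Np i j
        = image_mset (commute_plus_map \<phi> S\<psi> \<psi>) (mprod s Mp (fused_mprod k3 X2 P3) i j)"
    by (intro image_mset_relabel[OF L R W']) simp
qed

lemma sim_commute_minus_map: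
  fixes \<phi> \<psi> :: "word \<Rightarrow> word"
  assumes spec_\<phi>: "is_spec (words1 SM) (words2 C D) S\<phi> \<phi>"
    and spec_\<psi>: "is_spec (words1 SN) (words2 D C) S\<psi> \<psi>"
    and X0: "over D r k1 X0" and Y1: "over C k1 s Y1" and X2: "over D s k3 X2" and P3: "over C k3 t P3"
    and P1: "over C k1 k2 P1"
    and Mm: "sim S\<phi> (kappa \<circ> \<phi>) r s Mm r s (mprod k1 X0 Y1)"
    and Nm: "sim S\<psi> (kappa \<circ> \<psi>) k2 t Nm k2 t (mprod k4 Y2 X3)"
    and XP: "sim (words2 D C) kappa s t (mprod k3 X2 P3) s t (mprod k4 P2 X3)"
    and YP: "sim (words2 C C) kappa k1 k4 (mprod s Y1 P2) k1 k4 (mprod k2 P1 Y2)"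
  shows "sim (commute_minus_dom C D S\<phi> \<phi> S\<psi> \<psi>) (commute_minus_map \<phi> S\<psi> \<psi>)
           r t (mprod s Mm (fused_mprod k3 X2 P3)) r t (mprod k2 (fused_mprod k1 X0 P1) Nm)"
proof (rule simI)
  fix i j assume i: "i < r" and j: "j < t"
  have inj_\<phi>: "inj_on (kappa \<circ> \<phi>) S\<phi>" using spec_\<phi> by (auto simp: is_spec_def inj_on_def kappa_def)
  have inj_\<psi>: "inj_on (kappa \<circ> \<psi>) S\<psi>" using spec_\<psi> by (auto simp: is_spec_def inj_on_def kappa_def)
  define W where "W = mprod s (mprod k1 X0 Y1) (mprod k3 X2 P3) i j"
  define W' where "W' = mprod k2 (mprod k1 X0 P1) (mprod k4 Y2 X3) i j"
  define G where "G w = inv_into S\<phi> (kappa \<circ> \<phi>) (take 2 w) @ fuse (drop 2 w)" for w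
  define E where "E w = fuse (take 2 w) @ inv_into S\<psi> (kappa \<circ> \<psi>) (drop 2 w)" for w
  have length_X0Y1: "length u = 2" if "t' < s" "u \<in># mprod k1 X0 Y1 i t'" for t' u
    using length_over_mprod_entry[OF X0 Y1 i that] .
  have length_X0P1: "length u = 2" if "t' < k2" "u \<in># mprod k1 X0 P1 i t'" for t' u
    using length_over_mprod_entry[OF X0 P1 i that] .
  have L: "mprod s Mm (fused_mprod k3 X2 P3) i j = image_mset G W"
    unfolding W_def
    by (rule image_mset_mprod[symmetric])
       (use sim_inv_image[OF Mm inj_\<phi> i] length_X0Y1 in \<open>auto simp: G_def fused_mprod_def\<close>)
  have R: "mprod k2 (fused_mprod k1 X0 P1) Nm i j = image_mset E W'"
    unfolding W'_def
    by (rule image_mset_mprod[symmetric])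
       (use sim_inv_image[OF Nm inj_\<psi> _ j] length_X0P1 in \<open>auto simp: E_def fused_mprod_def\<close>)
  have W': "W' = image_mset (swap_at 1 \<circ> swap_at 2) W"
  proof -
    have "mprod s (mprod k1 X0 Y1) (mprod k4 P2 X3) i j = image_mset (swap_at (2 + 0)) W"
      unfolding W_def
      by (rule mprod_swap_at_right) (use sim_kappa_swap(1)[OF XP _ j] length_X0Y1 in auto)
    moreover have
      "mprod k4 (mprod k2 P1 Y2) X3 s' j = image_mset (swap_at 0) (mprod k4 (mprod s Y1 P2) X3 s' j)"
      if "s' < k1" for s'
      by (rule mprod_swap_at_left)
         (use sim_kappa_swap(1)[OF YP that] sim_kappa_words2_length(1)[OF YP that] in auto)
    then have "mprod k1 X0 (mprod k4 (mprod k2 P1 Y2) X3) i j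
        = image_mset (swap_at (1 + 0)) (mprod k1 X0 (mprod k4 (mprod s Y1 P2) X3) i j)"
      by (intro mprod_swap_at_right) (use length_over_entry[OF X0 i] in auto)
    ultimately show ?thesis
      unfolding W'_def mprod_assoc by (simp add: image_mset.compositionality)
  qed
  have "G w \<in> commute_minus_dom C D S\<phi> \<phi> S\<psi> \<psi> \<and>
      commute_minus_map \<phi> S\<psi> \<psi> (G w) = E (swap_at 1 (swap_at 2 w))"
    if "w \<in># W" for w
  proof -
    obtain t' u v where t': "t' < s" and u: "u \<in># mprod k1 X0 Y1 i t'"
      and v: "v \<in># mprod k3 X2 P3 t' j" and w: "w = u @ v"
      using \<open>w \<in># W\<close> unfolding W_def by (rule mem_mprodE)
    obtain a where a: "a \<in> S\<phi>" "u = kappa (\<phi> a)" using sim_entry[OF Mm i t' u] by auto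
    obtain a0 a1 a2 where A: "a = [a0]" "\<phi> a = [a1, a2]" using spec_entry[OF spec_\<phi> a(1)] by blast
    obtain x p where v_eq: "v = [x, p]" "x \<in> D" "p \<in> C" using over_mprod_entry[OF X2 P3 t' j v] by blast
    have "[a2, p, a1, x] \<in># W'"
      using \<open>w \<in># W\<close> a A v_eq unfolding W' by (force simp: w swap_at_def kappa_def)
    then obtain t'' where "t'' < k2" "[a1, x] \<in># mprod k4 Y2 X3 t'' j"
      unfolding W'_def using mprod_entry_drop[OF _ length_X0P1, of "[a2, p, a1, x]"] by force
    then have "[a1, x] \<in> (kappa \<circ> \<psi>) ` S\<psi>" using sim_entry[OF Nm _ j] by blast
    moreover have "G w = [a0, prod_encode (x, p)]"
      using a A v_eq inv_into_f_f[OF inj_\<phi> a(1)] by (simp add: G_def w fuse_def kappa_def)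
    ultimately show ?thesis
      using a A v_eq
      by (auto simp: commute_minus_dom_def commute_minus_map_def
          E_def fuse_def swap_at_def w kappa_def numeral_2_eq_2)
  qed
  then show "set_mset (mprod s Mm (fused_mprod k3 X2 P3) i j) \<subseteq> commute_minus_dom C D S\<phi> \<phi> S\<psi> \<psi> \<and>
      mprod k2 (fused_mprod k1 X0 P1) Nm i j
        = image_mset (commute_minus_map \<phi> S\<psi> \<psi>) (mprod s Mm (fused_mprod k3 X2 P3) i j)"
    by (intro image_mset_relabel[OF L R W']) simp
qed

section \<open>The construction from a proper strong shift equivalence\<close>

lemma add_numeral_eq_Suc:
  fixes k :: nat
  shows "k + 2 = Suc (Suc k)" and "k + 3 = Suc (Suc (Suc k))" and "k + 4 = Suc (Suc (Suc (Suc k)))"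
  by simp_all

locale psse1_witness =
  fixes SM :: "nat set" and m :: "nat \<Rightarrow> nat" and Mm Mp :: "nat \<Rightarrow> smat"
    and SN :: "nat set" and n :: "nat \<Rightarrow> nat" and Nm Np :: "nat \<Rightarrow> smat"
    and C D :: "nat set" and c d :: "nat \<Rightarrow> nat"
    and S\<phi> :: "word set" and \<phi> :: "word \<Rightarrow> word" and S\<psi> :: "word set" and \<psi> :: "word \<Rightarrow> word"
    and P Q X Y :: "nat \<Rightarrow> smat"
  assumes finite_C: "finite C" and finite_D: "finite D"
    and spec_\<phi>: "is_spec (words1 SM) (words2 C D) S\<phi> \<phi>"
    and spec_\<psi>: "is_spec (words1 SN) (words2 D C) S\<psi> \<psi>"
    and over_P: "\<And>l. over C (c l) (d (Suc l)) (P l)"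
    and over_Q: "\<And>l. over D (d l) (c (Suc l)) (Q l)"
    and over_XY: "\<And>l. if odd l then over D (d l) (d (Suc l)) (X l) \<and> over C (c l) (c (Suc l)) (Y l)
                      else over D (c l) (c (Suc l)) (X l) \<and> over C (d l) (d (Suc l)) (Y l)"
    and sim_Mp: "\<And>l. sim S\<phi> \<phi> (m l) (m (Suc l)) (Mp l)
                   (c (2*l)) (c (2*l+2)) (mprod (d (2*l+1)) (P (2*l)) (Q (2*l+1)))"
    and sim_Np: "\<And>l. sim S\<psi> \<psi> (n l) (n (Suc l)) (Np l)
                   (d (2*l)) (d (2*l+2)) (mprod (c (2*l+1)) (Q (2*l)) (P (2*l+1)))"
    and sim_Mm: "\<And>l. sim S\<phi> (kappa \<circ> \<phi>) (m l) (m (Suc l)) (Mm l)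
                   (c (2*l)) (c (2*l+2)) (mprod (c (2*l+1)) (X (2*l)) (Y (2*l+1)))"
    and sim_Nm: "\<And>l. sim S\<psi> (kappa \<circ> \<psi>) (n l) (n (Suc l)) (Nm l)
                   (d (2*l)) (d (2*l+2)) (mprod (d (2*l+1)) (Y (2*l)) (X (2*l+1)))"
    and sim_YP: "\<And>l. sim (words2 C C) kappa
                   (c (2*l+1)) (d (2*l+3)) (mprod (c (2*l+2)) (Y (2*l+1)) (P (2*l+2)))
                   (c (2*l+1)) (d (2*l+3)) (mprod (d (2*l+2)) (P (2*l+1)) (Y (2*l+2)))"
    and sim_XQ: "\<And>l. sim (words2 D D) kappa
                   (d (2*l+1)) (c (2*l+3)) (mprod (d (2*l+2)) (X (2*l+1)) (Q (2*l+2)))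
                   (d (2*l+1)) (c (2*l+3)) (mprod (c (2*l+2)) (Q (2*l+1)) (X (2*l+2)))"
    and sim_XP: "\<And>l. sim (words2 D C) kappa
                   (c (2*l)) (d (2*l+2)) (mprod (c (2*l+1)) (X (2*l)) (P (2*l+1)))
                   (c (2*l)) (d (2*l+2)) (mprod (d (2*l+1)) (P (2*l)) (X (2*l+1)))"
    and sim_YQ: "\<And>l. sim (words2 C D) kappa
                   (d (2*l)) (c (2*l+2)) (mprod (d (2*l+1)) (Y (2*l)) (Q (2*l+1)))
                   (d (2*l)) (c (2*l+2)) (mprod (c (2*l+1)) (Q (2*l)) (Y (2*l+1)))"

lemma psse1_obtain_witness:
  assumes "psse1 SM m Mm Mp SN n Nm Np"
  obtains C D c d S\<phi> \<phi> S\<psi> \<psi> P Q X Y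
  where "psse1_witness SM m Mm Mp SN n Nm Np C D c d S\<phi> \<phi> S\<psi> \<psi> P Q X Y"
  using assms unfolding psse1_def psse1_witness_def by blast

context psse1_witness
begin

lemma swap_roles: "psse1_witness SN n Nm Np SM m Mm Mp D C d c S\<psi> \<psi> S\<phi> \<phi> Q P Y X"
  by unfold_locales
    (use finite_C finite_D spec_\<phi> spec_\<psi> over_P over_Q over_XY sim_Mp sim_Np sim_Mm sim_Nm
         sim_YP sim_XQ sim_XP sim_YQ in auto)

abbreviation H :: "nat \<Rightarrow> smat" where
  "H l \<equiv> fused_mprod (c (2*l+1)) (X (2*l)) (P (2*l+1))"

abbreviation K :: "nat \<Rightarrow> smat" where
  "K l \<equiv> fused_mprod (d (2*l+1)) (Y (2*l)) (Q (2*l+1))"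

lemma m_eq: "m l = c (2*l)" and n_eq: "n l = d (2*l)"
  using sim_dims[OF sim_Mp] sim_dims[OF sim_Np] by simp_all

lemma over_X_even: "even l \<Longrightarrow> over D (c l) (c (Suc l)) (X l)"
  and over_Y_odd: "odd l \<Longrightarrow> over C (c l) (c (Suc l)) (Y l)"
  using over_XY[of l] by simp_all

text \<open>These rewrite every index such as 2*l+3, 2*Suc l+1 or 2*(l+2) to a Suc-chain over 2*l, so
  that the hypotheses instantiated at l and at Suc l match the generic lemmas above.\<close>

lemmas index_simps = over_P over_Q over_X_even over_Y_odd m_eq n_eq add_numeral_eq_Suc

lemma over_H: "over (prod_encode ` (D \<times> C)) (m l) (n (Suc l)) (H l)"
  unfolding m_eq n_eq
  by (rule over_fused_mprod) (simp_all add: index_simps)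

lemma sim_MmMp_HK:
  "sim (merge_dom S\<phi>) (merge_map \<phi>) (m l) (m (l+2)) (mprod (m (Suc l)) (Mm l) (Mp (Suc l)))
     (m l) (m (l+2)) (mprod (n (Suc l)) (H l) (K (Suc l)))"
  unfolding m_eq n_eq
  by (rule sim_merge_map[OF spec_\<phi>, where ?Y1.0 = "Y (2*l+1)" and ?P2.0 = "P (2*l+2)"])
     (use sim_Mm[of l] sim_Mp[of "Suc l"] sim_YP[of l] in \<open>simp_all add: index_simps\<close>)

lemma sim_MpH_HNp:
  "sim (commute_plus_dom C D S\<phi> \<phi> S\<psi> \<psi>) (commute_plus_map \<phi> S\<psi> \<psi>)
     (m l) (n (l+2)) (mprod (m (Suc l)) (Mp l) (H (Suc l)))
     (m l) (n (l+2)) (mprod (n (Suc l)) (H l) (Np (Suc l)))"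
  unfolding m_eq n_eq
  by (rule sim_commute_plus_map[OF spec_\<phi> spec_\<psi>, where ?k0.0 = "d (2*l+1)" and ?P0.0 = "P (2*l)"
        and ?Q1.0 = "Q (2*l+1)" and ?Q2.0 = "Q (2*l+2)" and ?X1.0 = "X (2*l+1)"])
     (use sim_Mp[of l] sim_Np[of "Suc l"] sim_XQ[of l] sim_XP[of l] in \<open>simp_all add: index_simps\<close>)

lemma sim_MmH_HNm:
  "sim (commute_minus_dom C D S\<phi> \<phi> S\<psi> \<psi>) (commute_minus_map \<phi> S\<psi> \<psi>)
     (m l) (n (l+2)) (mprod (m (Suc l)) (Mm l) (H (Suc l)))
     (m l) (n (l+2)) (mprod (n (Suc l)) (H l) (Nm (Suc l)))"
  unfolding m_eq n_eq
  by (rule sim_commute_minus_map[OF spec_\<phi> spec_\<psi>, where ?Y1.0 = "Y (2*l+1)" and ?k4.0 = "d (2*l+3)"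
        and ?Y2.0 = "Y (2*l+2)" and ?X3.0 = "X (2*l+3)" and ?P2.0 = "P (2*l+2)"])
     (use sim_Mm[of l] sim_Nm[of "Suc l"] sim_XP[of "Suc l"] sim_YP[of l] in \<open>simp_all add: index_simps\<close>)

lemma sse1: "sse1 SM SM m Mm Mp SN SN n Nm Np"
proof -
  interpret swapped: psse1_witness SN n Nm Np SM m Mm Mp D C d c S\<psi> \<psi> S\<phi> \<phi> Q P Y X
    by (rule swap_roles)
  have "finite (prod_encode ` (D \<times> C))" "finite (prod_encode ` (C \<times> D))"
    using finite_C finite_D by simp_all
  note witnesses = this
    is_spec_merge[OF spec_\<phi>] is_spec_merge[OF spec_\<psi>]
    is_spec_commute_plus[OF spec_\<phi> spec_\<psi>] is_spec_commute_plus[OF spec_\<psi> spec_\<phi>]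
    is_spec_commute_minus[OF spec_\<phi> spec_\<psi>] is_spec_commute_minus[OF spec_\<psi> spec_\<phi>]
    over_H swapped.over_H sim_MmMp_HK swapped.sim_MmMp_HK
    sim_MpH_HNp swapped.sim_MpH_HNp sim_MmH_HNm swapped.sim_MmH_HNm
  show ?thesis
    unfolding sse1_def by (intro exI conjI allI; rule witnesses)
qed

end

theorem proposition6p18:
  fixes SMm SMp SNm SNp :: "nat set"
    and m n :: "nat \<Rightarrow> nat"
    and Mm Mp Nm Np :: "nat \<Rightarrow> smat"
  assumes "bisystem SMm SMp m Mm Mp" and "FPCC SMm SMp m Mm Mp"
    and "bisystem SNm SNp n Nm Np" and "FPCC SNm SNp n Nm Np"
    and "psse1 SMp m Mm Mp SNp n Nm Np"
  shows "sse1 SMm SMp m Mm Mp SNm SNp n Nm Np"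
proof -
  have "SMm = SMp" "SNm = SNp"
    using assms(2,4) by (simp_all add: FPCC_def)
  moreover obtain C D c d S\<phi> \<phi> S\<psi> \<psi> P Q X Y
    where "psse1_witness SMp m Mm Mp SNp n Nm Np C D c d S\<phi> \<phi> S\<psi> \<psi> P Q X Y"
    using assms(5) by (rule psse1_obtain_witness)
  then have "sse1 SMp SMp m Mm Mp SNp SNp n Nm Np"
    by (rule psse1_witness.sse1)
  ultimately show ?thesis by simp
qed

end
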